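(* For $\epsilon>0$ let $u_\epsilon$ be the convex global solution on $\mathbb{R}^3$ of $\det D^2u_\epsilon = 1+\epsilon(\delta_{e_3}+\delta_{-e_3})$ (in the Alexandrov sense) that is asymptotic to $|x|^2/2$, i.e. $u_\epsilon(x)-|x|^2/2\to0$ as $|x|\to\infty$. Then $u_\epsilon\to|x|^2/2$ locally uniformly as $\epsilon\to0$; consequently, for all sufficiently small $\epsilon>0$, $u_\epsilon$ is not affine on the segment joining $-e_3$ and $e_3$.
   Context: $e_3=(0,0,1)$; $\delta_p$ is the Dirac mass at $p$; $1$ denotes Lebesgue measure. Alexandrov sense: the Monge-Ampère measure $Mu(E)=|\partial u(E)|$ equals the given measure. *)

theory Defs
  imports "HOL-Analysis.Analysis"
begin

type_synonym R3 = "real ^ 3"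

definition e3 :: R3 where "e3 = axis 3 1"

definition subdiff :: "(R3 \<Rightarrow> real) \<Rightarrow> R3 \<Rightarrow> R3 set" where
  "subdiff u x = {p. \<forall>y. u y \<ge> u x + p \<bullet> (y - x)}"

definition subdiff_set :: "(R3 \<Rightarrow> real) \<Rightarrow> R3 set \<Rightarrow> R3 set" where
  "subdiff_set u E = (\<Union>x\<in>E. subdiff u x)"

text \<open>u is an Alexandrov solution of det D^2 u = 1 + eps(delta_{e3} + delta_{-e3}) on R^3:
  u convex, and for every Borel set E, the Monge-Ampere measure |\<partial>u(E)| equals
  the Lebesgue measure of E plus eps times the Dirac masses at e3 and -e3.\<close>
definition alexandrov_sol :: "real \<Rightarrow> (R3 \<Rightarrow> real) \<Rightarrow> bool" where
  "alexandrov_sol eps u \<longleftrightarrow> convex_on UNIV u \<and>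
     (\<forall>E\<in>sets borel. subdiff_set u E \<in> sets lebesgue \<and>
        emeasure lebesgue (subdiff_set u E) =
          emeasure lebesgue E + ennreal eps * (indicator E e3 + indicator E (- e3)))"

end

theory Submission
  imports Defs "HOL-Homology.Invariance_of_Domain"
begin

text \<open>Both bounds come from comparison with explicit convex functions, using that the
  Monge-Ampere measure of an open set S is between |S| and |S| + 2 eps.
  If U exceeded |x|^2/2 somewhere, the bounded open set S where U lies above a slightly flatter
  paraboloid a |y|^2/2 + c (a < 1) would satisfy \<partial>U(S) \<subseteq> a S, so |S| \<le> a^3 |S|.
  If |x0|^2/2 - U x0 > k, then U lies below the barrier |y|^2/2 - k/(1 + |y - x0|) - \<eta> on a bounded
  open S containing x0; the subgradients of the barrier on S are subgradients of U on S, and they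
  fill the ball B(x0,k) (the conical vertex at x0) together with the image of S - {x0} under the
  gradient, an injective volume-expanding map. Hence |B_k| + |S| \<le> |S| + 2 eps.
  So |u_eps - |x|^2/2| \<le> k on all of R^3 once 2 eps < |B_k|, and near the strictly convex
  |x|^2/2 no u_eps can be affine on a segment of length 2.\<close>

lemma det_scaleR_plus_rank_one:
  fixes X :: "real^3"
  shows "det (matrix (\<lambda>h. a *\<^sub>R h + (b * (X \<bullet> h)) *\<^sub>R X)) = a^2 * (a + b * (X \<bullet> X))"
  unfolding det_3 by (simp add: matrix_def inner_vec_def sum_3 axis_def power2_eq_square algebra_simps)

definition barrier :: "real \<Rightarrow> R3 \<Rightarrow> R3 \<Rightarrow> real" where
  "barrier k x0 y = (norm y)\<^sup>2 / 2 - k / (1 + norm (y - x0))"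

text \<open>Off x0 the gradient of the barrier is barrier_grad, which moves a point at distance r
  from x0 radially to distance barrier_radius k r.\<close>

definition barrier_factor :: "real \<Rightarrow> real \<Rightarrow> real" where
  "barrier_factor k r = k / (r * (1 + r)^2)"

definition barrier_grad :: "real \<Rightarrow> R3 \<Rightarrow> R3 \<Rightarrow> R3" where
  "barrier_grad k x0 x = x + barrier_factor k (norm (x - x0)) *\<^sub>R (x - x0)"

definition barrier_radius :: "real \<Rightarrow> real \<Rightarrow> real" where
  "barrier_radius k r = r + k / (1 + r)^2"

definition barrier_grad_deriv :: "real \<Rightarrow> R3 \<Rightarrow> R3 \<Rightarrow> R3 \<Rightarrow> R3" where
  "barrier_grad_deriv k x0 x h = (1 + barrier_factor k (norm (x - x0))) *\<^sub>R h +
     (- k * (1 + 3 * norm (x - x0)) / ((norm (x - x0))^3 * (1 + norm (x - x0))^3) * ((x - x0) \<bullet> h))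
       *\<^sub>R (x - x0)"

text \<open>The right-hand side is the Jacobian determinant of barrier_grad at distance r from x0.\<close>

lemma one_le_barrier_jacobian:
  fixes r k :: real
  assumes r: "0 < r" and k: "0 \<le> k" "k \<le> 1/2"
  shows "1 \<le> (1 + k / (r * (1 + r)^2))^2 * (1 - 2 * k / (1 + r)^3)"
proof -
  define s where "s = 1 + r"
  define A where "A = k / (r * s^2)"
  define B where "B = 2 * k / s^3"
  have s: "1 < s" using r by (simp add: s_def)
  have "0 \<le> A" using r k by (simp add: A_def s_def)
  moreover have "B \<le> 1"
  proof -
    have "1 \<le> s^3" using s by simp
    then have "2 * k \<le> s^3" using k by linarith
    then show ?thesis using s by (simp add: B_def divide_le_eq)
  qed
  moreover have "0 \<le> 2 * A - B - 2 * A * B"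
  proof -
    have "2 * A - B - 2 * A * B = 2 * k * (s^2 * (s - r) - 2 * k) / (r * s^5)"
      using r s by (simp add: A_def B_def field_simps power2_eq_square power3_eq_cube eval_nat_numeral)
    moreover have "0 \<le> s^2 * (s - r) - 2 * k"
    proof -
      have "1 \<le> s^2" using s by simp
      then show ?thesis using k by (simp add: s_def)
    qed
    ultimately show ?thesis using r s k by simp
  qed
  ultimately have "(1 + 2 * A) * (1 - B) \<le> (1 + A)^2 * (1 - B)"
    by (intro mult_right_mono) (auto simp: power2_eq_square algebra_simps)
  moreover have "1 \<le> (1 + 2 * A) * (1 - B)" using \<open>0 \<le> 2 * A - B - 2 * A * B\<close> by (simp add: algebra_simps)
  ultimately show ?thesis by (simp add: A_def B_def s_def)
qed

lemma barrier_factor_has_derivative: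
  assumes "r > 0"
  shows "(barrier_factor k has_real_derivative - k * (1 + 3*r) / (r^2 * (1 + r)^3)) (at r)"
proof -
  have "(barrier_factor k has_real_derivative - k * ((1 + r)^2 + r * (2 * (1 + r))) / (r * (1 + r)^2)^2) (at r)"
    unfolding barrier_factor_def[abs_def] using assms
    by (auto intro!: derivative_eq_intros simp: power2_eq_square)
  moreover have "- k * ((1 + r)^2 + r * (2 * (1 + r))) / (r * (1 + r)^2)^2 = - k * (1 + 3*r) / (r^2 * (1 + r)^3)"
    using assms by (simp add: divide_simps) (simp add: algebra_simps power2_eq_square power3_eq_cube eval_nat_numeral)
  ultimately show ?thesis by simp
qed

lemma has_derivative_barrier_grad:
  assumes "x \<noteq> x0"
  shows "(barrier_grad k x0 has_derivative barrier_grad_deriv k x0 x) (at x)"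
proof -
  define r where "r = norm (x - x0)"
  have r: "r > 0" using assms by (simp add: r_def)
  have "((\<lambda>y. norm (y - x0)) has_derivative (\<lambda>h. h \<bullet> sgn (x - x0))) (at x)"
    using has_derivative_compose[OF has_derivative_diff[OF has_derivative_ident has_derivative_const]
        has_derivative_norm[of "x - x0"]] assms
    by (simp add: gderiv_def)
  then have "((\<lambda>y. barrier_factor k (norm (y - x0))) has_derivative
       (\<lambda>h. (- k * (1 + 3*r) / (r^2 * (1 + r)^3)) * (h \<bullet> sgn (x - x0)))) (at x)"
    using has_derivative_compose barrier_factor_has_derivative[OF r, of k]
    unfolding has_field_derivative_def r_def by blast
  then have D: "(barrier_grad k x0 has_derivative
     (\<lambda>h. h + (barrier_factor k r *\<^sub>R h + ((- k * (1 + 3*r) / (r^2 * (1 + r)^3)) * (h \<bullet> sgn (x - x0))) *\<^sub>R (x - x0)))) (at x)"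
    unfolding barrier_grad_def[abs_def] r_def
    by (auto intro!: derivative_eq_intros)
  have sgn: "h \<bullet> sgn (x - x0) = ((x - x0) \<bullet> h) / r" for h
    by (simp add: sgn_div_norm r_def inner_commute divide_inverse_commute)
  show ?thesis
    by (rule has_derivative_eq_rhs[OF D])
      (simp add: fun_eq_iff barrier_grad_deriv_def scaleR_add_left sgn r_def[symmetric]
        power3_eq_cube power2_eq_square)
qed

lemma one_le_det_barrier_grad_deriv:
  fixes x x0 :: R3
  assumes "x \<noteq> x0" "0 \<le> k" "k \<le> 1/2"
  shows "1 \<le> det (matrix (barrier_grad_deriv k x0 x))"
proof -
  define r where "r = norm (x - x0)"
  have r: "r > 0" using assms by (simp add: r_def)
  have "det (matrix (barrier_grad_deriv k x0 x))
      = (1 + barrier_factor k r)^2 *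
        (1 + barrier_factor k r + - k * (1 + 3*r) / (r^3 * (1 + r)^3) * ((x - x0) \<bullet> (x - x0)))"
    unfolding barrier_grad_deriv_def[abs_def] r_def by (rule det_scaleR_plus_rank_one)
  also have "(x - x0) \<bullet> (x - x0) = r^2" by (simp add: r_def power2_norm_eq_inner)
  also have "1 + barrier_factor k r + - k * (1 + 3*r) / (r^3 * (1 + r)^3) * r^2 = 1 - 2 * k / (1 + r)^3"
    using r by (simp add: barrier_factor_def divide_simps add_pos_pos)
      (simp add: algebra_simps power2_eq_square power3_eq_cube)
  finally show ?thesis
    using one_le_barrier_jacobian[OF r assms(2,3)] by (simp add: barrier_factor_def)
qed

lemma radial_barrier_supporting:
  fixes r s k :: real
  assumes "0 < r" "0 \<le> s" "0 \<le> k" "k \<le> 1/2"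
  shows "r^2/2 - k/(1+r) + (r + k/(1+r)^2) * (s - r) \<le> s^2/2 - k/(1+s)"
proof -
  have "s^2/2 - k/(1+s) - (r^2/2 - k/(1+r) + (r + k/(1+r)^2) * (s - r))
      = (s - r)^2/2 - k * (1/(1+s) - 1/(1+r) + (s - r)/(1+r)^2)"
    by (simp add: field_simps power2_eq_square)
  also have "1/(1+s) - 1/(1+r) + (s - r)/(1+r)^2 = (s - r)^2 / ((1+s) * (1+r)^2)"
    using assms by (simp add: divide_simps) (simp add: algebra_simps power2_eq_square)
  also have "(s - r)^2/2 - k * ((s - r)^2 / ((1+s) * (1+r)^2)) = (s - r)^2 * (1/2 - k / ((1+s) * (1+r)^2))"
    by (simp add: algebra_simps)
  also have "\<dots> \<ge> 0"
  proof -
    have "1 \<le> (1+s) * (1+r)^2"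
      using assms by (simp add: one_le_power mult_ge1_I)
    then have "k / ((1+s) * (1+r)^2) \<le> k"
      using assms by (simp add: divide_le_eq mult_le_cancel_left1)
    then have "0 \<le> 1/2 - k / ((1+s) * (1+r)^2)" using assms by linarith
    then show ?thesis by simp
  qed
  finally show ?thesis by simp
qed

lemma barrier_grad_supporting:
  assumes "x \<noteq> x0" "0 \<le> k" "k \<le> 1/2"
  shows "barrier k x0 x + barrier_grad k x0 x \<bullet> (y - x) \<le> barrier k x0 y"
proof -
  define X where "X = x - x0"
  define Y where "Y = y - x0"
  define r where "r = norm X"
  define g where "g = barrier_factor k r"
  have r: "r > 0" using assms by (simp add: r_def X_def)
  have g: "g \<ge> 0" using r assms by (simp add: g_def barrier_factor_def)
  have xy: "x = x0 + X" "y = x0 + Y" "barrier_grad k x0 x = (x0 + X) + g *\<^sub>R X"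
    by (simp_all add: X_def Y_def barrier_grad_def g_def r_def)
  have "(norm (x0 + Y))\<^sup>2/2 - (norm (x0 + X))\<^sup>2/2 - ((x0 + X) + g *\<^sub>R X) \<bullet> (Y - X)
      = ((norm Y)\<^sup>2 + (norm X)\<^sup>2)/2 - (1 + g) * (X \<bullet> Y) + g * (norm X)\<^sup>2"
    by (simp add: power2_norm_eq_inner inner_add_left inner_add_right inner_diff_left inner_diff_right
        inner_commute field_simps)
  then have "barrier k x0 y - barrier k x0 x - barrier_grad k x0 x \<bullet> (y - x)
      = ((norm Y)^2 + r^2)/2 - (1 + g) * (X \<bullet> Y) + g * r^2 - k/(1 + norm Y) + k/(1+r)"
    unfolding xy(3) by (simp add: barrier_def xy(1,2) r_def algebra_simps)
  also have "\<dots> \<ge> ((norm Y)^2 + r^2)/2 - (1 + g) * (r * norm Y) + g * r^2 - k/(1 + norm Y) + k/(1+r)"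
    using mult_left_mono[OF norm_cauchy_schwarz[of X Y], of "1 + g"] g by (simp add: r_def)
  also have "((norm Y)^2 + r^2)/2 - (1 + g) * (r * norm Y) + g * r^2 - k/(1 + norm Y) + k/(1+r)
      = ((norm Y)^2/2 - k/(1 + norm Y)) - (r^2/2 - k/(1+r) + (r + g * r) * (norm Y - r))"
    by (simp add: algebra_simps power2_eq_square)
  also have "g * r = k/(1+r)^2" using r by (simp add: g_def barrier_factor_def)
  also have "(norm Y)^2/2 - k/(1 + norm Y) - (r^2/2 - k/(1+r) + (r + k/(1+r)^2) * (norm Y - r)) \<ge> 0"
    using radial_barrier_supporting[OF r norm_ge_zero assms(2,3)] by simp
  finally show ?thesis by simp
qed

lemma barrier_vertex_supporting:
  assumes "norm (p - x0) \<le> k" "k \<le> 1/2"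
  shows "barrier k x0 x0 + p \<bullet> (y - x0) \<le> barrier k x0 y"
proof -
  define s where "s = norm (y - x0)"
  have s: "s \<ge> 0" by (simp add: s_def)
  have "barrier k x0 y - barrier k x0 x0 - p \<bullet> (y - x0) = s^2/2 - (p - x0) \<bullet> (y - x0) + k - k/(1+s)"
    by (simp add: barrier_def s_def power2_norm_eq_inner inner_diff_left inner_diff_right
        inner_commute field_simps)
  also have "\<dots> \<ge> s^2/2 - k * s + k - k/(1+s)"
    using norm_cauchy_schwarz[of "p - x0" "y - x0"] mult_right_mono[OF assms(1) s]
    by (simp add: s_def)
  also have "s^2/2 - k * s + k - k/(1+s) = s^2 * (1/2 - k/(1+s))"
    using s by (simp add: field_simps power2_eq_square)
  also have "\<dots> \<ge> 0"
  proof -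
    have "k/(1+s) \<le> 1/2" using assms s norm_ge_zero[of "p - x0"] by (simp add: divide_le_eq)
    then show ?thesis by simp
  qed
  finally show ?thesis by simp
qed

lemma barrier_grad_minus_center:
  "barrier_grad k x0 x - x0 = (1 + barrier_factor k (norm (x - x0))) *\<^sub>R (x - x0)"
  by (simp add: barrier_grad_def algebra_simps)

lemma norm_barrier_grad_minus_center:
  assumes "x \<noteq> x0" "0 \<le> k"
  shows "norm (barrier_grad k x0 x - x0) = barrier_radius k (norm (x - x0))"
proof -
  have "0 \<le> barrier_factor k (norm (x - x0))" using assms by (simp add: barrier_factor_def)
  then show ?thesis
    using assms by (simp add: barrier_grad_minus_center barrier_radius_def barrier_factor_def
        distrib_right power2_eq_square)
qed

lemma barrier_radius_strict_mono:
  assumes "0 \<le> k" "k \<le> 1/2"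
  shows "strict_mono_on {0..} (barrier_radius k)"
proof (rule strict_mono_onI)
  fix r s :: real assume rs: "r \<in> {0..}" "s \<in> {0..}" "r < s"
  have "k * (2 + r + s) < (1 + r)^2 * (1 + s)^2"
  proof -
    have "k * (2 + r + s) \<le> (2 + r + s) / 2" using assms rs by (simp add: mult_right_mono)
    also have "\<dots> < (1 + r) * (1 + s)"
    proof -
      have "0 \<le> r * (s * 2)" "0 \<le> r" using rs by auto
      then have "0 < r + (s + r * (s * 2))" using rs by linarith
      then show ?thesis by (simp add: algebra_simps)
    qed
    also have "\<dots> \<le> ((1 + r) * (1 + s))^2"
    proof -
      have "1 \<le> (1 + r) * (1 + s)" using rs by (intro mult_ge1_I) auto
      then show ?thesis by (rule self_le_power) simp
    qed
    finally show ?thesis by (simp add: power_mult_distrib)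
  qed
  then have "k * (2 + r + s) / ((1 + r)^2 * (1 + s)^2) < 1" using rs by simp
  then have "0 < (s - r) * (1 - k * (2 + r + s) / ((1 + r)^2 * (1 + s)^2))"
    using rs by (intro mult_pos_pos) auto
  moreover have "barrier_radius k s - barrier_radius k r
      = (s - r) * (1 - k * (2 + r + s) / ((1 + r)^2 * (1 + s)^2))"
    using rs by (simp add: barrier_radius_def divide_simps) (simp add: algebra_simps power2_eq_square)
  ultimately show "barrier_radius k r < barrier_radius k s" by linarith
qed

lemma inj_on_barrier_grad:
  assumes "0 \<le> k" "k \<le> 1/2"
  shows "inj_on (barrier_grad k x0) (- {x0})"
proof (rule inj_onI)
  fix x y assume x: "x \<in> - {x0}" and y: "y \<in> - {x0}" and eq: "barrier_grad k x0 x = barrier_grad k x0 y"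
  then have "barrier_radius k (norm (x - x0)) = barrier_radius k (norm (y - x0))"
    using assms norm_barrier_grad_minus_center by (metis ComplD singletonI)
  then have "norm (y - x0) = norm (x - x0)"
    using strict_mono_on_eqD[OF barrier_radius_strict_mono[OF assms]] by simp
  then have "barrier_grad k x0 y - x0 = (1 + barrier_factor k (norm (x - x0))) *\<^sub>R (y - x0)"
    by (simp add: barrier_grad_minus_center)
  moreover have "barrier_grad k x0 x - x0 = (1 + barrier_factor k (norm (x - x0))) *\<^sub>R (x - x0)"
    by (rule barrier_grad_minus_center)
  ultimately have "(1 + barrier_factor k (norm (x - x0))) *\<^sub>R (x - x0)
      = (1 + barrier_factor k (norm (x - x0))) *\<^sub>R (y - x0)"
    using eq by metis
  moreover have "0 \<le> barrier_factor k (norm (x - x0))" using assms by (simp add: barrier_factor_def)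
  ultimately show "x = y" by auto
qed

lemma barrier_grad_image_measure:
  fixes T :: "R3 set"
  assumes T: "open T" "bounded T" "x0 \<notin> T" and k: "0 \<le> k" "k \<le> 1/2"
  shows "barrier_grad k x0 ` T \<in> lmeasurable"
    and "measure lebesgue T \<le> measure lebesgue (barrier_grad k x0 ` T)"
proof -
  have x0: "x \<in> T \<Longrightarrow> x \<noteq> x0" for x using T by auto
  have D: "(barrier_grad k x0 has_derivative barrier_grad_deriv k x0 x) (at x within T)" if "x \<in> T" for x
    using has_derivative_barrier_grad[OF x0[OF that]] by (rule has_derivative_at_withinI)
  have inj: "inj_on (barrier_grad k x0) T"
    by (rule inj_on_subset[OF inj_on_barrier_grad[OF k]]) (use T(3) in auto)
  have "open (barrier_grad k x0 ` T)"
    using has_derivative_continuous_on[OF D] T(1) inj by (rule invariance_of_domain)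
  moreover have "bounded (barrier_grad k x0 ` T)"
  proof -
    obtain B where B: "T \<subseteq> cball x0 B"
      using bounded_subset_ballD[OF T(2), of x0] ball_subset_cball by blast
    have "barrier_grad k x0 ` T \<subseteq> cball x0 (B + k)"
    proof
      fix y assume "y \<in> barrier_grad k x0 ` T"
      then obtain x where x: "x \<in> T" "y = barrier_grad k x0 x" by auto
      have "norm (y - x0) = norm (x - x0) + k / (1 + norm (x - x0))^2"
        using norm_barrier_grad_minus_center[OF x0[OF x(1)] k(1)] x by (simp add: barrier_radius_def)
      also have "k / (1 + norm (x - x0))^2 \<le> k"
        using k by (simp add: divide_le_eq mult_le_cancel_left1 one_le_power)
      also have "norm (x - x0) \<le> B" using B x by (auto simp: dist_norm norm_minus_commute)
      finally show "y \<in> cball x0 (B + k)" by (simp add: dist_norm norm_minus_commute)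
    qed
    then show ?thesis using bounded_cball bounded_subset by blast
  qed
  ultimately show image: "barrier_grad k x0 ` T \<in> lmeasurable" by (intro lmeasurable_open)
  have T_meas: "T \<in> lmeasurable" using T by (intro lmeasurable_open)
  have integrable: "(\<lambda>x. \<bar>det (matrix (barrier_grad_deriv k x0 x))\<bar>) integrable_on T"
    using measurable_differentiable_image_eq[OF _ D inj] image T_meas by auto
  have "measure lebesgue T = integral T (\<lambda>x. 1::real)" using T_meas by (rule lmeasure_integral)
  also have "\<dots> \<le> integral T (\<lambda>x. \<bar>det (matrix (barrier_grad_deriv k x0 x))\<bar>)"
  proof (rule integral_le)
    fix x assume "x \<in> T"
    then show "1 \<le> \<bar>det (matrix (barrier_grad_deriv k x0 x))\<bar>"
      using one_le_det_barrier_grad_deriv[OF x0 k] by fastforce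
  qed (use T_meas integrable integrable_on_const in auto)
  also have "\<dots> = measure lebesgue (barrier_grad k x0 ` T)"
    using measure_differentiable_image_eq[OF _ D inj integrable] T_meas by simp
  finally show "measure lebesgue T \<le> measure lebesgue (barrier_grad k x0 ` T)" .
qed

lemma ball_union_barrier_grad_image_measure:
  fixes S :: "R3 set" and x0 :: R3
  assumes S: "open S" "bounded S" and k: "0 \<le> k" "k \<le> 1/2"
  defines "G \<equiv> ball x0 k \<union> barrier_grad k x0 ` (S - {x0})"
  shows "G \<in> lmeasurable"
    and "measure lebesgue (ball (0::R3) k) + measure lebesgue S \<le> measure lebesgue G"
proof -
  have T: "open (S - {x0})" "bounded (S - {x0})" "x0 \<notin> S - {x0}"
    using S by (auto simp: open_delete bounded_subset)
  note image = barrier_grad_image_measure[OF T k]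
  show G: "G \<in> lmeasurable" unfolding G_def using image(1) by (intro fmeasurable.Un) auto
  have "k < norm (barrier_grad k x0 x - x0)" if "x \<noteq> x0" for x
  proof -
    have "barrier_radius k 0 < barrier_radius k (norm (x - x0))"
      using that by (intro strict_mono_onD[OF barrier_radius_strict_mono[OF k]]) auto
    then show ?thesis using norm_barrier_grad_minus_center[OF that k(1)] by (simp add: barrier_radius_def)
  qed
  then have disjoint: "ball x0 k \<inter> barrier_grad k x0 ` (S - {x0}) = {}"
    by (force simp: dist_norm norm_minus_commute)
  have "measure lebesgue (ball (0::R3) k) = measure lebesgue (ball x0 k)"
    using content_ball_conv_unit_ball[OF k(1), of x0] content_ball_conv_unit_ball[OF k(1), of "0::R3"] by simp
  moreover have "measure lebesgue S = measure lebesgue (S - {x0})"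
    using S(1) by (simp add: measure_Diff_null_set negligible_iff_null_sets)
  moreover have "measure lebesgue G = measure lebesgue (ball x0 k) + measure lebesgue (barrier_grad k x0 ` (S - {x0}))"
    unfolding G_def using lmeasurable_ball[of x0 k] image(1) disjoint
    by (intro measure_Union) (auto simp: fmeasurable_def)
  ultimately show "measure lebesgue (ball (0::R3) k) + measure lebesgue S \<le> measure lebesgue G"
    using image(2) by simp
qed

lemma supporting_slope_in_subdiff_set:
  fixes U w :: "R3 \<Rightarrow> real"
  assumes min: "\<exists>z. \<forall>y. U z - p \<bullet> z \<le> U y - p \<bullet> y"
    and x: "U x < w x" and supporting: "\<And>y. w x + p \<bullet> (y - x) \<le> w y"
  shows "p \<in> subdiff_set U {y. U y < w y}"
proof -
  obtain z where z: "\<And>y. U z - p \<bullet> z \<le> U y - p \<bullet> y" using min by blast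
  have "U z - p \<bullet> z \<le> U x - p \<bullet> x" by (rule z)
  also have "\<dots> < w x - p \<bullet> x" using x by simp
  also have "\<dots> \<le> w z - p \<bullet> z" using supporting[of z] by (simp add: inner_diff_right)
  finally have "U z < w z" by simp
  moreover have "p \<in> subdiff U z"
    unfolding subdiff_def using z by (auto simp: inner_diff_right algebra_simps)
  ultimately show ?thesis unfolding subdiff_set_def by blast
qed

lemma subdiff_set_subset_scaleR_image:
  fixes U :: "R3 \<Rightarrow> real"
  assumes a: "0 < a" and boundary: "\<And>y. norm y = R \<Longrightarrow> U y \<le> a * ((norm y)\<^sup>2 / 2) + c"
  defines "S \<equiv> {y. norm y < R \<and> a * ((norm y)\<^sup>2 / 2) + c < U y}"
  shows "subdiff_set U S \<subseteq> (\<lambda>x. a *\<^sub>R x) ` S"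
proof
  fix p assume "p \<in> subdiff_set U S"
  then obtain z where z: "z \<in> S" and pz: "\<And>y. U z + p \<bullet> (y - z) \<le> U y"
    by (auto simp: subdiff_set_def subdiff_def)
  define w where "w y = a * ((norm y)\<^sup>2 / 2) + c" for y :: R3
  define ys where "ys = (1 / a) *\<^sub>R p"
  define F where "F y = U z + p \<bullet> (y - z) - w y" for y
  have p: "p = a *\<^sub>R ys" using a by (simp add: ys_def)
  have F: "F y = F ys - a / 2 * (norm (y - ys))\<^sup>2" for y
    unfolding F_def w_def p
    by (simp add: power2_norm_eq_inner inner_diff_left inner_diff_right inner_commute algebra_simps)
  have Fz: "0 < F z" using z by (simp add: S_def F_def w_def)
  \<comment> \<open>F is positive at z, nonpositive on the sphere, and decreases away from its vertex ys\<close>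
  have "norm ys < R"
  proof (rule ccontr)
    assume "\<not> norm ys < R"
    moreover have "norm z < R" using z by (simp add: S_def)
    moreover have "continuous_on {0..1} (\<lambda>t. norm (z + t *\<^sub>R (ys - z)))"
      by (intro continuous_intros)
    ultimately obtain t where t: "0 \<le> t" "t \<le> 1" "norm (z + t *\<^sub>R (ys - z)) = R"
      using IVT'[of "\<lambda>t. norm (z + t *\<^sub>R (ys - z))" 0 R 1] by auto
    define y where "y = z + t *\<^sub>R (ys - z)"
    have "y - ys = (1 - t) *\<^sub>R (z - ys)" by (simp add: y_def algebra_simps)
    then have "(norm (y - ys))\<^sup>2 \<le> (norm (z - ys))\<^sup>2"
      using t by (simp add: power_mult_distrib mult_left_le_one_le power_le_one)
    then have "F z \<le> F y" using F[of y] F[of z] a by (simp add: mult_left_mono)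
    moreover have "F y \<le> U y - w y" using pz[of y] by (simp add: F_def)
    moreover have "U y \<le> w y" using boundary t by (simp add: y_def w_def)
    ultimately show False using Fz by linarith
  qed
  moreover have "w ys < U ys"
  proof -
    have "F z \<le> F ys" using F[of z] a by simp
    then show ?thesis using pz[of ys] Fz by (simp add: F_def)
  qed
  ultimately show "p \<in> (\<lambda>x. a *\<^sub>R x) ` S" using p by (auto simp: S_def w_def)
qed

lemma measure_lebesgue_open_pos:
  fixes S :: "'a::euclidean_space set"
  assumes "open S" "bounded S" "x \<in> S"
  shows "0 < measure lebesgue S"
proof -
  obtain e where e: "0 < e" "ball x e \<subseteq> S" using assms open_contains_ball by blast
  have "0 < measure lebesgue (ball x e)" using content_ball_pos[OF e(1)] by simp
  also have "\<dots> \<le> measure lebesgue S"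
    using e assms by (intro measure_mono_fmeasurable) (auto intro: lmeasurable_open)
  finally show ?thesis .
qed

locale asymptotically_paraboloidal_sol =
  fixes eps :: real and U :: "R3 \<Rightarrow> real"
  assumes eps_pos: "0 < eps" and sol: "alexandrov_sol eps U"
    and asymptotic: "((\<lambda>x. U x - (norm x)\<^sup>2 / 2) \<longlongrightarrow> 0) at_infinity"
begin

lemma continuous_U: "continuous_on UNIV U"
  using sol by (intro convex_on_continuous[OF open_UNIV]) (simp add: alexandrov_sol_def)

lemma near_paraboloid_outside_ball:
  assumes "0 < \<eta>"
  obtains R where "\<And>x. R \<le> norm x \<Longrightarrow> \<bar>U x - (norm x)\<^sup>2 / 2\<bar> < \<eta>"
proof -
  have "\<forall>\<^sub>F x in at_infinity. dist (U x - (norm x)\<^sup>2 / 2) 0 < \<eta>"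
    using asymptotic assms by (rule tendstoD)
  then show ?thesis using that by (auto simp: eventually_at_infinity dist_real_def)
qed

lemma exists_minimizer_minus_linear: "\<exists>z. \<forall>y. U z - p \<bullet> z \<le> U y - p \<bullet> y"
proof -
  obtain R1 where R1: "\<And>x. R1 \<le> norm x \<Longrightarrow> \<bar>U x - (norm x)\<^sup>2 / 2\<bar> < 1"
    using near_paraboloid_outside_ball[of 1] by auto
  define R where "R = max R1 (2 * norm p + 2 + 2 * \<bar>U 0\<bar>)"
  have "0 \<le> R" by (simp add: R_def le_max_iff_disj)
  moreover have "continuous_on (cball 0 R) (\<lambda>y. U y - p \<bullet> y)"
    by (intro continuous_intros continuous_on_subset[OF continuous_U]) auto
  ultimately have "\<exists>z\<in>cball 0 R. \<forall>y\<in>cball 0 R. U z - p \<bullet> z \<le> U y - p \<bullet> y"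
    by (intro continuous_attains_inf) auto
  then obtain z where min: "\<forall>y\<in>cball 0 R. U z - p \<bullet> z \<le> U y - p \<bullet> y" by blast
  \<comment> \<open>outside cball 0 R the quadratic growth of U beats the linear term\<close>
  have far: "U 0 < U y - p \<bullet> y" if "R < norm y" for y
  proof -
    have "(norm y)\<^sup>2 / 2 - 1 < U y" using R1[of y] that by (simp add: R_def)
    moreover have "p \<bullet> y \<le> norm p * norm y" by (rule norm_cauchy_schwarz)
    moreover have "2 * (1 + \<bar>U 0\<bar>) \<le> norm y * (norm y / 2 - norm p)"
    proof -
      have "2 * norm p + 2 + 2 * \<bar>U 0\<bar> < norm y" using that by (simp add: R_def)
      then show ?thesis
        by (intro mult_mono) (use norm_ge_zero[of p] abs_ge_zero[of "U 0"] in linarith)+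
    qed
    ultimately show ?thesis by (simp add: power2_eq_square algebra_simps)
  qed
  have "U z - p \<bullet> z \<le> U 0" using bspec[OF min, of 0] \<open>0 \<le> R\<close> by simp
  then have "U z - p \<bullet> z \<le> U y - p \<bullet> y" for y
    using min far[of y] by (cases "y \<in> cball 0 R") auto
  then show ?thesis by blast
qed

lemma measure_subdiff_set:
  assumes "bounded E" "open E"
  shows "subdiff_set U E \<in> lmeasurable"
    and "measure lebesgue E \<le> measure lebesgue (subdiff_set U E)"
    and "measure lebesgue (subdiff_set U E) \<le> measure lebesgue E + 2 * eps"
proof -
  have E: "E \<in> lmeasurable" using assms by (rule lmeasurable_open)
  define i where "i = (indicator E e3 + indicator E (- e3) :: real)"
  have i: "0 \<le> i" "i \<le> 2" by (auto simp: i_def indicator_def)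
  have indicators: "(indicator E e3 + indicator E (- e3) :: ennreal) = ennreal i"
    by (simp add: i_def indicator_def)
  have sets: "subdiff_set U E \<in> sets lebesgue"
    and "emeasure lebesgue (subdiff_set U E) =
      emeasure lebesgue E + ennreal eps * (indicator E e3 + indicator E (- e3))"
    using sol borel_open[OF assms(2)] unfolding alexandrov_sol_def by blast+
  then have emeasure: "emeasure lebesgue (subdiff_set U E) = ennreal (measure lebesgue E + eps * i)"
    using eps_pos i by (simp add: indicators emeasure_eq_measure2[OF E] ennreal_mult' ennreal_plus)
  then show "subdiff_set U E \<in> lmeasurable" using sets by (intro fmeasurableI) auto
  have "measure lebesgue (subdiff_set U E) = enn2real (ennreal (measure lebesgue E + eps * i))"
    unfolding measure_def[of lebesgue "subdiff_set U E"] emeasure ..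
  also have "\<dots> = measure lebesgue E + eps * i"
    using eps_pos i by (intro enn2real_ennreal add_nonneg_nonneg measure_nonneg) simp
  finally show "measure lebesgue E \<le> measure lebesgue (subdiff_set U E)"
    and "measure lebesgue (subdiff_set U E) \<le> measure lebesgue E + 2 * eps"
    using eps_pos i by (simp_all add: mult_left_le)
qed

lemma not_subdiff_set_subset_shrunk_image:
  assumes "open S" "bounded S" "x \<in> S" "0 < a" "a < 1"
  shows "\<not> subdiff_set U S \<subseteq> (\<lambda>x. a *\<^sub>R x) ` S"
proof
  assume subset: "subdiff_set U S \<subseteq> (\<lambda>x. a *\<^sub>R x) ` S"
  have "(\<lambda>x. a *\<^sub>R x) ` S \<in> lmeasurable"
    using assms by (intro lmeasurable_open bounded_scaling open_scaling) auto
  then have "measure lebesgue (subdiff_set U S) \<le> measure lebesgue ((\<lambda>x. a *\<^sub>R x) ` S)"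
    using subset measure_subdiff_set(1)[OF assms(2,1)] by (intro measure_mono_fmeasurable) auto
  also have "\<dots> = a^3 * measure lebesgue S" using measure_lebesgue_affine[of a 0 S] assms by simp
  finally have "measure lebesgue S \<le> a^3 * measure lebesgue S"
    using measure_subdiff_set(2)[OF assms(2,1)] by linarith
  moreover have "0 < measure lebesgue S" using measure_lebesgue_open_pos[OF assms(1-3)] .
  moreover have "a^3 < 1" using assms by (simp add: power_less_one_iff)
  ultimately show False by simp
qed

lemma le_half_norm_sq: "U x0 \<le> (norm x0)\<^sup>2 / 2"
proof (rule ccontr)
  assume "\<not> U x0 \<le> (norm x0)\<^sup>2 / 2"
  define \<eta> where "\<eta> = (U x0 - (norm x0)\<^sup>2 / 2) / 3"
  have \<eta>: "0 < \<eta>" using \<open>\<not> U x0 \<le> _\<close> by (simp add: \<eta>_def)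
  obtain R0 where R0: "\<And>x. R0 \<le> norm x \<Longrightarrow> \<bar>U x - (norm x)\<^sup>2 / 2\<bar> < \<eta>"
    using near_paraboloid_outside_ball[OF \<eta>] by blast
  define R where "R = max R0 (norm x0 + 1)"
  have R: "norm x0 < R" "R0 \<le> R" by (auto simp: R_def less_max_iff_disj)
  then have "0 < R" using norm_ge_zero[of x0] by linarith
  define \<delta> where "\<delta> = min (1/2) (2 * \<eta> / R^2)"
  have \<delta>: "0 < \<delta>" "\<delta> < 1" "\<delta> * R^2 / 2 \<le> \<eta>"
    using \<eta> \<open>0 < R\<close> by (auto simp: \<delta>_def min_def field_simps)
  \<comment> \<open>a slightly flatter paraboloid that lies above U on the sphere of radius R but below it at x0\<close>
  define a where "a = 1 - \<delta>"
  define c where "c = \<eta> + \<delta> * R^2 / 2"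
  define S where "S = {y. norm y < R \<and> a * ((norm y)\<^sup>2 / 2) + c < U y}"
  have a: "0 < a" "a < 1" using \<delta> by (auto simp: a_def)
  have boundary: "U y \<le> a * ((norm y)\<^sup>2 / 2) + c" if "norm y = R" for y
  proof -
    have "a * ((norm y)\<^sup>2 / 2) + c = (norm y)\<^sup>2 / 2 + \<eta>"
      using that by (simp add: a_def c_def field_simps)
    then show ?thesis using R0[of y] R that by (simp add: abs_less_iff)
  qed
  have "a * ((norm x0)\<^sup>2 / 2) + c \<le> (norm x0)\<^sup>2 / 2 + 2 * \<eta>"
  proof -
    have "a * ((norm x0)\<^sup>2 / 2) + c = (norm x0)\<^sup>2 / 2 - \<delta> * (norm x0)\<^sup>2 / 2 + (\<eta> + \<delta> * R^2 / 2)"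
      by (simp add: a_def c_def field_simps)
    moreover have "0 \<le> \<delta> * (norm x0)\<^sup>2" using \<delta> by simp
    ultimately show ?thesis using \<delta> by linarith
  qed
  moreover have "3 * \<eta> = U x0 - (norm x0)\<^sup>2 / 2" by (simp add: \<eta>_def)
  ultimately have x0: "x0 \<in> S" using R \<eta> by (simp add: S_def)
  have "open S"
  proof -
    have "S = ball 0 R \<inter> {y. a * ((norm y)\<^sup>2 / 2) + c < U y}" by (auto simp: S_def)
    then show ?thesis
      by (auto intro!: open_Int open_Collect_less continuous_U continuous_intros)
  qed
  moreover have "bounded S" by (rule bounded_subset[of "ball 0 R"]) (auto simp: S_def)
  moreover have "subdiff_set U S \<subseteq> (\<lambda>x. a *\<^sub>R x) ` S"
    unfolding S_def by (rule subdiff_set_subset_scaleR_image[OF a(1) boundary])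
  ultimately show False using not_subdiff_set_subset_shrunk_image x0 a by blast
qed

lemma bounded_below_shifted_paraboloid:
  assumes "0 < \<eta>" and below: "\<And>y. w y \<le> (norm y)\<^sup>2 / 2 - \<eta>"
  shows "bounded {y. U y < w y}"
proof -
  obtain R where R: "\<And>x. R \<le> norm x \<Longrightarrow> \<bar>U x - (norm x)\<^sup>2 / 2\<bar> < \<eta>"
    using near_paraboloid_outside_ball[OF assms(1)] by blast
  have "{y. U y < w y} \<subseteq> ball 0 R"
  proof
    fix y assume "y \<in> {y. U y < w y}"
    then have "U y < (norm y)\<^sup>2 / 2 - \<eta>" using below[of y] by simp
    then show "y \<in> ball 0 R" using R[of y] by (force simp: abs_less_iff)
  qed
  then show ?thesis using bounded_ball bounded_subset by blast
qed

lemma ball_union_barrier_grad_image_subset_subdiff_set: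
  fixes x0 :: R3 and \<eta> :: real
  assumes "0 \<le> k" "k \<le> 1/2"
  defines "S \<equiv> {y. U y < barrier k x0 y - \<eta>}"
  assumes x0: "x0 \<in> S"
  shows "ball x0 k \<union> barrier_grad k x0 ` (S - {x0}) \<subseteq> subdiff_set U S"
proof -
  have slope: "p \<in> subdiff_set U S"
    if "x \<in> S" "\<And>y. barrier k x0 x + p \<bullet> (y - x) \<le> barrier k x0 y" for x p
    using supporting_slope_in_subdiff_set[OF exists_minimizer_minus_linear, of x "\<lambda>y. barrier k x0 y - \<eta>"]
      that by (simp add: S_def)
  have "ball x0 k \<subseteq> subdiff_set U S"
  proof
    fix p assume "p \<in> ball x0 k"
    then have "norm (p - x0) \<le> k" by (simp add: dist_norm norm_minus_commute)
    then show "p \<in> subdiff_set U S" using slope[OF x0] barrier_vertex_supporting assms(2) by blast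
  qed
  moreover have "barrier_grad k x0 ` (S - {x0}) \<subseteq> subdiff_set U S"
    using slope barrier_grad_supporting assms(1,2) by blast
  ultimately show ?thesis by blast
qed

lemma half_norm_sq_le:
  assumes k: "0 < k" "k \<le> 1/2" and small: "2 * eps < measure lebesgue (ball (0::R3) k)"
  shows "(norm x0)\<^sup>2 / 2 - U x0 \<le> k"
proof (rule ccontr)
  assume "\<not> (norm x0)\<^sup>2 / 2 - U x0 \<le> k"
  define \<eta> where "\<eta> = ((norm x0)\<^sup>2 / 2 - U x0 - k) / 2"
  have \<eta>: "0 < \<eta>" using \<open>\<not> _ \<le> k\<close> by (simp add: \<eta>_def)
  define S where "S = {y. U y < barrier k x0 y - \<eta>}"
  have "barrier k x0 x0 - \<eta> = (norm x0)\<^sup>2 / 2 - k - \<eta>" by (simp add: barrier_def)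
  moreover have "\<eta> * 2 = (norm x0)\<^sup>2 / 2 - U x0 - k" by (simp add: \<eta>_def)
  ultimately have x0: "x0 \<in> S" using \<eta> by (simp add: S_def)
  have "1 + norm (y - x0) \<noteq> 0" for y by (metis add_pos_nonneg norm_ge_zero zero_less_one less_irrefl)
  then have "open S"
    unfolding S_def barrier_def by (intro open_Collect_less continuous_U continuous_intros) auto
  moreover have "bounded S"
    unfolding S_def using k by (intro bounded_below_shifted_paraboloid[OF \<eta>]) (simp add: barrier_def)
  moreover have "ball x0 k \<union> barrier_grad k x0 ` (S - {x0}) \<subseteq> subdiff_set U S"
    using ball_union_barrier_grad_image_subset_subdiff_set x0 k unfolding S_def by simp
  ultimately have "measure lebesgue (ball x0 k \<union> barrier_grad k x0 ` (S - {x0}))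
      \<le> measure lebesgue (subdiff_set U S)"
    using ball_union_barrier_grad_image_measure(1)[of S k x0] measure_subdiff_set(1)[of S] k
    by (intro measure_mono_fmeasurable) auto
  then have "measure lebesgue (ball (0::R3) k) + measure lebesgue S \<le> measure lebesgue (subdiff_set U S)"
    using ball_union_barrier_grad_image_measure(2)[OF \<open>open S\<close> \<open>bounded S\<close>, of k x0] k by simp
  also have "\<dots> \<le> measure lebesgue S + 2 * eps" using measure_subdiff_set(3) \<open>open S\<close> \<open>bounded S\<close> by blast
  finally show False using small by linarith
qed

lemma near_half_norm_sq:
  assumes "0 < k" "k \<le> 1/2" "2 * eps < measure lebesgue (ball (0::R3) k)"
  shows "\<bar>U x - (norm x)\<^sup>2 / 2\<bar> \<le> k"
  using le_half_norm_sq[of x] half_norm_sq_le[OF assms, of x] by linarith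

end

lemma alexandrov_sols_uniform_limit:
  fixes u :: "real \<Rightarrow> R3 \<Rightarrow> real"
  assumes "\<And>eps. 0 < eps \<Longrightarrow> asymptotically_paraboloidal_sol eps (u eps)"
  shows "uniform_limit UNIV u (\<lambda>x. (norm x)\<^sup>2 / 2) (at_right 0)"
proof (rule uniform_limitI)
  fix e :: real assume "0 < e"
  define k where "k = min (e / 2) (1 / 2)"
  have k: "0 < k" "k \<le> 1/2" "k < e" using \<open>0 < e\<close> by (auto simp: k_def)
  have "0 < measure lebesgue (ball (0::R3) k)" using content_ball_pos[OF k(1)] by simp
  then have "\<forall>\<^sub>F eps in at_right 0. 2 * eps < measure lebesgue (ball (0::R3) k)"
    by (auto simp: eventually_at_right_field intro!: exI[of _ "measure lebesgue (ball (0::R3) k) / 2"])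
  moreover have "\<forall>\<^sub>F eps in at_right (0::real). 0 < eps" by (simp add: eventually_at_right_less)
  ultimately show "\<forall>\<^sub>F eps in at_right 0. \<forall>x\<in>UNIV. dist (u eps x) ((norm x)\<^sup>2 / 2) < e"
  proof eventually_elim
    case (elim eps)
    interpret asymptotically_paraboloidal_sol eps "u eps" using elim(2) by (rule assms)
    show ?case
    proof
      fix x
      have "\<bar>u eps x - (norm x)\<^sup>2 / 2\<bar> \<le> k" by (rule near_half_norm_sq[OF k(1,2) elim(1)])
      then show "dist (u eps x) ((norm x)\<^sup>2 / 2) < e" using k(3) by (simp add: dist_real_def)
    qed
  qed
qed

lemma not_affine_on_segment_if_near_half_norm_sq:
  fixes f :: "R3 \<Rightarrow> real"
  assumes "norm e = 1" and near: "\<And>x. dist (f x) ((norm x)\<^sup>2 / 2) < 1/4"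
  shows "\<not> (\<exists>a b. \<forall>x\<in>closed_segment (- e) e. f x = a \<bullet> x + b)"
proof
  assume "\<exists>a b. \<forall>x\<in>closed_segment (- e) e. f x = a \<bullet> x + b"
  then obtain a b where ab: "\<And>x. x \<in> closed_segment (- e) e \<Longrightarrow> f x = a \<bullet> x + b" by blast
  have "0 \<in> closed_segment (- e) e"
    using midpoint_in_closed_segment[of "- e" e] by (simp add: midpoint_def)
  \<comment> \<open>affinity forces f 0 to be the mean of f e and f (- e), which are near 1/2 while f 0 is near 0\<close>
  then have "2 * f 0 = f e + f (- e)" using ab[of 0] ab[of e] ab[of "- e"] by simp
  moreover have "\<bar>f e - 1/2\<bar> < 1/4" "\<bar>f (- e) - 1/2\<bar> < 1/4" "\<bar>f 0\<bar> < 1/4"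
    using near[of e] near[of "- e"] near[of 0] \<open>norm e = 1\<close> by (simp_all add: dist_real_def)
  ultimately show False by linarith
qed

theorem mainTheorem8:
  fixes u :: "real \<Rightarrow> R3 \<Rightarrow> real"
  assumes sol: "\<And>eps. eps > 0 \<Longrightarrow> alexandrov_sol eps (u eps)"
      and asym: "\<And>eps. eps > 0 \<Longrightarrow>
                   ((\<lambda>x. u eps x - (norm x)\<^sup>2 / 2) \<longlongrightarrow> 0) at_infinity"
  shows "(\<forall>K. compact K \<longrightarrow> uniform_limit K u (\<lambda>x. (norm x)\<^sup>2 / 2) (at_right 0))
       \<and> (\<forall>\<^sub>F eps in at_right 0.
            \<not> (\<exists>a b. \<forall>x\<in>closed_segment (- e3) e3. u eps x = a \<bullet> x + b))"
proof
  have uniform: "uniform_limit UNIV u (\<lambda>x. (norm x)\<^sup>2 / 2) (at_right 0)"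
    using sol asym by (intro alexandrov_sols_uniform_limit) unfold_locales
  then show "\<forall>K. compact K \<longrightarrow> uniform_limit K u (\<lambda>x. (norm x)\<^sup>2 / 2) (at_right 0)"
    using uniform_limit_on_subset by blast
  have "\<forall>\<^sub>F eps in at_right 0. \<forall>x\<in>UNIV. dist (u eps x) ((norm x)\<^sup>2 / 2) < 1/4"
    by (rule uniform_limitD[OF uniform]) simp
  then show "\<forall>\<^sub>F eps in at_right 0. \<not> (\<exists>a b. \<forall>x\<in>closed_segment (- e3) e3. u eps x = a \<bullet> x + b)"
  proof eventually_elim
    case (elim eps)
    have "norm e3 = 1" by (simp add: e3_def)
    then show ?case using elim by (intro not_affine_on_segment_if_near_half_norm_sq) auto
  qed
qed

end
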